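(* Let $p>1$ be an integer and let $u^{(p)}$ be the fixed point of the substitution $\varphi_p(L)=L^pS$, $\varphi_p(S)=M$, $\varphi_p(M)=L^{p-1}S$. (i) For every factor $\hat v$ of $u^{(p)}$, $|\hat v|_M\le 1+\frac{|\hat v|-1}{p^2+p}$. (ii) If moreover $\hat v$ has a prefix or a suffix of length greater than or equal to $\Delta$ (a nonnegative integer) that contains no letter $M$, then $|\hat v|_M\le\left\lceil\frac{|\hat v|-\Delta}{p^2+p}\right\rceil$.
   Context: $u^{(p)}=\lim_{n\to\infty}\varphi_p^n(L)$. A factor is a finite contiguous subword; $|w|$ is the length and $|w|_M$ the number of occurrences of $M$ in $w$. *)

theory Defs
  imports Complex_Main
begin

datatype letter = L | S | M

fun phi_letter :: "nat \<Rightarrow> letter \<Rightarrow> letter list" where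
  "phi_letter p L = replicate p L @ [S]"
| "phi_letter p S = [M]"
| "phi_letter p M = replicate (p - 1) L @ [S]"

definition phi :: "nat \<Rightarrow> letter list \<Rightarrow> letter list" where
  "phi p w = concat (map (phi_letter p) w)"

text \<open>u^(p) = lim phi_p^n(L). Since phi_p(L) begins with L, phi_p^n(L) is a prefix of
  phi_p^(n+1)(L) and |phi_p^n(L)| \<ge> 2^n > k for n = k+1, so letter k of the limit is
  letter k of phi_p^(k+1)(L).\<close>
definition u :: "nat \<Rightarrow> nat \<Rightarrow> letter" where
  "u p k = ((phi p ^^ Suc k) [L]) ! k"

definition factor :: "nat \<Rightarrow> letter list \<Rightarrow> bool" where
  "factor p v \<longleftrightarrow> (\<exists>i. v = map (u p) [i..<i + length v])"

definition countM :: "letter list \<Rightarrow> nat" where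
  "countM w = length (filter (\<lambda>x. x = M) w)"

end

theory Submission
  imports Defs "HOL-Library.Sublist"
begin

text \<open>
  An M of \<open>\<phi>\<^sub>p\<^sup>2(w)\<close> is the image of an S of \<open>\<phi>\<^sub>p(w)\<close>, and an S of \<open>\<phi>\<^sub>p(w)\<close> closes the
  image of an L or an M of \<open>w\<close>. Hence two M's of \<open>\<phi>\<^sub>p\<^sup>2(w)\<close> enclose \<open>\<phi>\<^sub>p(y)\<close>, where \<open>y\<close> lies
  between two S's of \<open>\<phi>\<^sub>p(w)\<close> and ends with \<open>L\<^sup>p\<close> or \<open>L\<^sup>p\<^sup>-\<^sup>1\<close>. In the first case
  \<open>|\<phi>\<^sub>p(y)| \<ge> p(p+1)\<close>; in the second the closing letter of \<open>w\<close> is an M, which in \<open>u\<^sup>(\<^sup>p\<^sup>)\<close>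
  always follows an S, so \<open>y\<close> also contains the image of a further letter and
  \<open>|\<phi>\<^sub>p(y)| \<ge> p + (p-1)(p+1)\<close>. Thus distinct M's of \<open>u\<^sup>(\<^sup>p\<^sup>) = \<phi>\<^sub>p\<^sup>2(u\<^sup>(\<^sup>p\<^sup>))\<close> are at
  distance at least \<open>p\<^sup>2+p\<close>, and both bounds follow by counting.
\<close>

lemma concat_map_split_at_last:
  assumes last_only: "\<And>a. c \<notin> set (butlast (f a))"
    and "concat (map f w) = x @ c # r"
  obtains w1 a w2 t where "w = w1 @ a # w2" "x = concat (map f w1) @ t" "f a = t @ [c]"
    "r = concat (map f w2)"
proof -
  have "\<exists>w1 a w2 t. w = w1 @ a # w2 \<and> x = concat (map f w1) @ t \<and> f a = t @ [c]
          \<and> r = concat (map f w2)"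
    using assms(2)
  proof (induction w arbitrary: x)
    case (Cons b w)
    then have "f b @ concat (map f w) = x @ c # r" by simp
    then consider us where "f b = x @ us" "us @ concat (map f w) = c # r"
      | us where "x = f b @ us" "concat (map f w) = us @ c # r"
      by (auto simp: append_eq_append_conv2)
    then show ?case
    proof cases
      case (1 us)
      show ?thesis
      proof (cases us)
        case Nil
        with 1 Cons.IH[of "[]"] obtain w1 a w2 t where
          "w = w1 @ a # w2" "[] = concat (map f w1) @ t" "f a = t @ [c]" "r = concat (map f w2)"
          by auto
        with 1 Nil show ?thesis by (intro exI[of _ "b # w1"]) auto
      next
        case (Cons c' us')
        with 1 have "f b = x @ c # us'" by simp
        with last_only[of b] have "us' = []"
          by (cases us' rule: rev_cases) (auto simp: butlast_append)
        with 1 Cons show ?thesis by (intro exI[of _ "[]"]) auto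
      qed
    next
      case (2 us)
      with Cons.IH[of us] obtain w1 a w2 t where
        "w = w1 @ a # w2" "us = concat (map f w1) @ t" "f a = t @ [c]" "r = concat (map f w2)"
        by auto
      with 2 show ?thesis by (intro exI[of _ "b # w1"]) auto
    qed
  qed simp
  then show ?thesis using that by blast
qed

definition spaced :: "'a \<Rightarrow> nat \<Rightarrow> 'a list \<Rightarrow> bool" where
  "spaced a d w \<longleftrightarrow> (\<forall>x y z. w = x @ a # y @ a # z \<longrightarrow> d \<le> Suc (length y))"

lemma spaced_sublist: "spaced a d w \<Longrightarrow> sublist v w \<Longrightarrow> spaced a d v"
  unfolding spaced_def sublist_def by (metis append.assoc append_Cons)

lemma spaced_count_list: "spaced a d w \<Longrightarrow> d * count_list w a \<le> length w + d - 1"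
proof (induction "length w" arbitrary: w rule: less_induct)
  case less
  show ?case
  proof (cases "a \<in> set w")
    case True
    then obtain y z where w: "w = y @ a # z" "a \<notin> set y"
      by (blast dest: split_list_first)
    show ?thesis
    proof (cases "a \<in> set z")
      case True
      then obtain y' z' where z: "z = y' @ a # z'" "a \<notin> set y'"
        by (blast dest: split_list_first)
      have "d \<le> Suc (length y')"
        using less.prems unfolding spaced_def w z by blast
      moreover have "sublist (a # z') w"
        unfolding w z by (metis append.assoc append_Cons sublist_append_leftI)
      then have "d * count_list (a # z') a \<le> length (a # z') + d - 1"
        using less.prems by (intro less.hyps) (auto simp: w z intro: spaced_sublist)
      ultimately show ?thesis using w z by simp
    qed (use w in simp)
  qed simp
qed

lemma spaced_count_list_le:
  assumes "spaced a d w" and "d \<ge> 1"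
  shows "real (count_list w a) \<le> 1 + (real (length w) - 1) / real d"
proof -
  have "real d * real (count_list w a) \<le> real (length w) + real d - 1"
    using spaced_count_list[OF assms(1)] assms(2) by (simp flip: of_nat_mult)
  with assms(2) show ?thesis by (simp add: field_simps)
qed

lemma spaced_count_list_le_ceiling:
  assumes "spaced a d w" and "d \<ge> 1"
  shows "real (count_list w a) \<le> of_int \<lceil>real (length w) / real d\<rceil>"
proof -
  have "0 < 1 / real d"
    using assms(2) by simp
  then have "real (count_list w a) - 1 < real (length w) / real d"
    using spaced_count_list_le[OF assms] by (simp only: diff_divide_distrib)
  then have "int (count_list w a) \<le> \<lceil>real (length w) / real d\<rceil>"
    by (simp add: le_ceiling_iff)
  then show ?thesis by linarith
qed

lemma phi_Nil [simp]: "phi p [] = []"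
  by (simp add: phi_def)

lemma phi_Cons [simp]: "phi p (a # w) = phi_letter p a @ phi p w"
  by (simp add: phi_def)

lemma phi_append [simp]: "phi p (xs @ ys) = phi p xs @ phi p ys"
  by (simp add: phi_def)

lemma countM_eq_count_list: "countM w = count_list w M"
  by (induction w) (auto simp: countM_def)

lemma phi_letter_ne_Nil [simp]: "phi_letter p a \<noteq> []"
  by (cases a) auto

lemma length_phi_ge: "p \<ge> 1 \<Longrightarrow> length w + count_list w L \<le> length (phi p w)"
proof (induction w)
  case (Cons a w)
  then show ?case by (cases a) auto
qed simp

lemma prefix_phi: "prefix x y \<Longrightarrow> prefix (phi p x) (phi p y)"
  by (auto elim!: prefixE)

lemma prefix_phi_power_Suc: "p \<ge> 1 \<Longrightarrow> prefix ((phi p ^^ n) [L]) ((phi p ^^ Suc n) [L])"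
proof (induction n)
  case 0
  then show ?case by (cases p) auto
qed (simp add: prefix_phi)

lemma prefix_phi_power:
  assumes "p \<ge> 1" and "m \<le> n"
  shows "prefix ((phi p ^^ m) [L]) ((phi p ^^ n) [L])"
  using assms(2)
proof (induction n rule: dec_induct)
  case (step n)
  with prefix_phi_power_Suc[OF assms(1)] show ?case by (blast intro: prefix_order.trans)
qed simp

lemma length_phi_power: "p \<ge> 1 \<Longrightarrow> n < length ((phi p ^^ n) [L])"
proof (induction n)
  case (Suc n)
  have "L \<in> set ((phi p ^^ n) [L])"
    using set_mono_prefix[OF prefix_phi_power[OF Suc.prems, of 0 n]] by simp
  then have "count_list ((phi p ^^ n) [L]) L \<ge> 1"
    by (metis count_list_0_iff less_one not_le)
  with Suc length_phi_ge[OF Suc.prems, of "(phi p ^^ n) [L]"] show ?case by simp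
qed simp

lemma u_eq_nth_phi_power:
  assumes "p \<ge> 1" and "k < n"
  shows "u p k = (phi p ^^ n) [L] ! k"
proof -
  obtain t where "(phi p ^^ n) [L] = (phi p ^^ Suc k) [L] @ t"
    using prefix_phi_power[OF assms(1), of "Suc k" n] assms(2) by (auto elim: prefixE)
  then show ?thesis
    using length_phi_power[OF assms(1), of "Suc k"] by (simp add: u_def nth_append)
qed

lemma factor_sublist_phi_power:
  assumes "p \<ge> 1" and "factor p v"
  obtains n where "sublist v (phi p (phi p ((phi p ^^ n) [L])))"
proof -
  obtain i where v: "v = map (u p) [i..<i + length v]"
    using assms(2) unfolding factor_def by blast
  define n where "n = i + length v"
  let ?w = "(phi p ^^ Suc (Suc n)) [L]"
  have "v = map (\<lambda>k. ?w ! k) [i..<i + length v]"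
    by (subst v, rule map_cong[OF refl], rule u_eq_nth_phi_power[OF assms(1)]) (simp add: n_def)
  also have "\<dots> = take (length v) (drop i ?w)"
    using length_phi_power[OF assms(1), of "Suc (Suc n)"]
    by (intro nth_equalityI) (auto simp: n_def)
  finally have "sublist v ?w"
    by (metis append_take_drop_id sublist_appendI)
  then show ?thesis
    by (intro that[of n]) simp
qed

text \<open>Neither SS nor M after a letter other than S occurs in \<open>u\<^sup>(\<^sup>p\<^sup>)\<close>; the first
  restriction is what makes the second one stable under \<open>\<phi>\<^sub>p\<close>.\<close>

definition legal_pair :: "letter \<Rightarrow> letter \<Rightarrow> bool" where
  "legal_pair a b \<longleftrightarrow> \<not> (a = S \<and> b = S) \<and> (b = M \<longrightarrow> a = S)"

lemma successively_legal_phi_letter: "successively legal_pair (phi_letter p a)"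
proof -
  have "successively legal_pair (replicate k L @ [S])" for k
    by (induction k) (auto simp: successively_Cons legal_pair_def hd_append)
  then show ?thesis by (cases a) auto
qed

lemma legal_pair_phi_letter:
  assumes "p \<ge> 2" and "legal_pair a b"
  shows "legal_pair (last (phi_letter p a)) (hd (phi_letter p b))"
proof -
  have "replicate p L = L # replicate (p - 1) L" "replicate (p - 1) L = L # replicate (p - 2) L"
    using assms(1) by (simp_all add: replicate_Suc[symmetric] del: replicate_Suc)
  with assms(2) show ?thesis by (cases a; cases b) (auto simp: legal_pair_def)
qed

lemma successively_legal_phi:
  assumes "p \<ge> 2" and "successively legal_pair w"
  shows "successively legal_pair (phi p w)"
  using assms(2)
proof (induction w rule: induct_list012)
  case (3 a b w)
  then have "legal_pair (last (phi_letter p a)) (hd (phi p (b # w)))"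
    using legal_pair_phi_letter[OF assms(1)] by simp
  with 3 show ?case
    by (simp add: successively_append_iff successively_legal_phi_letter)
qed (simp_all add: successively_legal_phi_letter)

lemma successively_legal_phi_power:
  "p \<ge> 2 \<Longrightarrow> successively legal_pair ((phi p ^^ n) [L])"
  by (induction n) (simp_all add: successively_legal_phi)

lemma phi_split_at_M:
  assumes "phi p w = x @ M # r"
  obtains w1 w2 where "w = w1 @ S # w2" "x = phi p w1" "r = phi p w2"
proof -
  have "M \<notin> set (butlast (phi_letter p a))" for a
    by (cases a) auto
  with concat_map_split_at_last[of M "phi_letter p" w x r] assms obtain w1 a w2 t where
    "w = w1 @ a # w2" "x = phi p w1 @ t" "phi_letter p a = t @ [M]" "r = phi p w2"
    unfolding phi_def by blast
  moreover from \<open>phi_letter p a = t @ [M]\<close> have "a = S" "t = []"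
    by (cases a; auto)+
  ultimately show ?thesis using that by simp
qed

lemma phi_split_at_S:
  assumes "phi p w = x @ S # r"
  obtains w1 a w2 t where "w = w1 @ a # w2" "a \<noteq> S" "x = phi p w1 @ t"
    "phi_letter p a = t @ [S]" "r = phi p w2"
proof -
  have "S \<notin> set (butlast (phi_letter p a))" for a
    by (cases a) auto
  with concat_map_split_at_last[of S "phi_letter p" w x r] assms obtain w1 a w2 t where
    "w = w1 @ a # w2" "x = phi p w1 @ t" "phi_letter p a = t @ [S]" "r = phi p w2"
    unfolding phi_def by blast
  moreover from \<open>phi_letter p a = t @ [S]\<close> have "a \<noteq> S"
    by auto
  ultimately show ?thesis using that by simp
qed

lemma length_phi_replicate_L: "length (phi p (replicate k L)) = k * (p + 1)"
  by (induction k) auto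

lemma length_phi_phi_ge:
  assumes "p \<ge> 2" and "w \<noteq> []"
  shows "p \<le> length (phi p (phi p w))"
proof -
  obtain c w' where "w = c # w'" using assms(2) by (cases w) auto
  moreover have "p \<le> length (phi p (phi_letter p c))"
    using assms(1) by (cases c) (auto simp: length_phi_replicate_L)
  ultimately show ?thesis by simp
qed

lemma phi_S_gap:
  assumes "p \<ge> 2" and legal: "successively legal_pair w"
    and "phi p w = x @ S # y @ S # z"
  shows "p\<^sup>2 + p \<le> Suc (length (phi p y))"
proof -
  obtain w1 a w2 where A: "w = w1 @ a # w2" "a \<noteq> S" "phi p w2 = y @ S # z"
    using assms(3) by (rule phi_split_at_S) auto
  obtain w3 b w4 t' where B: "w2 = w3 @ b # w4" "y = phi p w3 @ t'" "phi_letter p b = t' @ [S]"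
    using A(3) by (rule phi_split_at_S) auto
  show ?thesis
  proof (cases b)
    case L
    then have "t' = replicate p L" using B(3) by simp
    then have "p * (p + 1) \<le> length (phi p y)"
      using B(2) by (simp add: length_phi_replicate_L)
    then show ?thesis by (simp add: power2_eq_square algebra_simps)
  next
    case S
    then show ?thesis using B(3) by simp
  next
    case M
    have "w3 \<noteq> []"
    proof
      assume "w3 = []"
      with A(1) B(1) M have "w = w1 @ [a, M] @ w4" by simp
      with legal A(2) show False
        by (simp add: successively_append_iff legal_pair_def)
    qed
    then have "p \<le> length (phi p (phi p w3))" using length_phi_phi_ge[OF assms(1)] by blast
    moreover have "t' = replicate (p - 1) L" using M B(3) by simp
    ultimately have "p + (p - 1) * (p + 1) \<le> length (phi p y)"
      using B(2) by (simp add: length_phi_replicate_L)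
    moreover have "p + (p - 1) * (p + 1) + 1 = p\<^sup>2 + p" using assms(1)
      by (cases p) (auto simp: power2_eq_square algebra_simps)
    ultimately show ?thesis by linarith
  qed
qed

lemma spaced_M_phi_phi:
  assumes "p \<ge> 2" and "successively legal_pair w"
  shows "spaced M (p\<^sup>2 + p) (phi p (phi p w))"
  unfolding spaced_def
proof (intro allI impI)
  fix x y z
  assume "phi p (phi p w) = x @ M # y @ M # z"
  then obtain w1 w2 where A: "phi p w = w1 @ S # w2" "phi p w2 = y @ M # z"
    by (rule phi_split_at_M) simp
  obtain w3 w4 where "w2 = w3 @ S # w4" "y = phi p w3"
    using A(2) by (rule phi_split_at_M)
  with A(1) show "p\<^sup>2 + p \<le> Suc (length y)"
    using phi_S_gap[OF assms] by simp
qed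

lemma spaced_M_factor:
  assumes "p \<ge> 2" and "factor p v"
  shows "spaced M (p\<^sup>2 + p) v"
proof -
  from assms have "p \<ge> 1" by simp
  then obtain n where "sublist v (phi p (phi p ((phi p ^^ n) [L])))"
    using assms(2) by (rule factor_sublist_phi_power)
  then show ?thesis
    using spaced_M_phi_phi[OF assms(1) successively_legal_phi_power[OF assms(1)]]
    by (rule spaced_sublist[rotated])
qed

theorem mainTheorem7:
  fixes p :: nat and v :: "letter list" and \<Delta> :: nat
  assumes "p > 1" and "factor p v"
  shows "real (countM v) \<le> 1 + (real (length v) - 1) / real (p^2 + p)
     \<and> ((\<exists>w. ((\<exists>z. v = w @ z) \<or> (\<exists>z. v = z @ w)) \<and> length w \<ge> \<Delta> \<and> M \<notin> set w)
          \<longrightarrow> real (countM v) \<le> real_of_int \<lceil>(real (length v) - real \<Delta>) / real (p^2 + p)\<rceil>)"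
proof (intro conjI impI)
  have spaced_v: "spaced M (p\<^sup>2 + p) v"
    using assms by (intro spaced_M_factor) simp_all
  have d: "p\<^sup>2 + p \<ge> 1"
    using assms(1) by simp
  show "real (countM v) \<le> 1 + (real (length v) - 1) / real (p^2 + p)"
    using spaced_count_list_le[OF spaced_v d] by (simp add: countM_eq_count_list)
  assume "\<exists>w. ((\<exists>z. v = w @ z) \<or> (\<exists>z. v = z @ w)) \<and> length w \<ge> \<Delta> \<and> M \<notin> set w"
  then obtain w z where wz: "v = w @ z \<or> v = z @ w" "\<Delta> \<le> length w" "M \<notin> set w"
    by blast
  then have "countM v = count_list z M" and z_length: "real (length z) \<le> real (length v) - real \<Delta>"
    by (auto simp: countM_eq_count_list)
  moreover have "spaced M (p\<^sup>2 + p) z"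
    using wz(1) by (auto intro: spaced_sublist[OF spaced_v])
  ultimately have "real (countM v) \<le> of_int \<lceil>real (length z) / real (p\<^sup>2 + p)\<rceil>"
    using spaced_count_list_le_ceiling[OF _ d] by simp
  also have "\<dots> \<le> of_int \<lceil>(real (length v) - real \<Delta>) / real (p\<^sup>2 + p)\<rceil>"
    using z_length by (simp only: of_int_le_iff, intro ceiling_mono divide_right_mono) simp_all
  finally show "real (countM v) \<le> real_of_int \<lceil>(real (length v) - real \<Delta>) / real (p^2 + p)\<rceil>" .
qed

end
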